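(* The rolling sieve finds all primes up to a bound $n$ using $O(n\log\log n)$ arithmetic operations and $O(\sqrt{n}\log n)$ bits of space.
   Context: Model of computation: a RAM where, for input $n$, arithmetic operations on integers of $O(\log n)$ bits and other basic operations have unit cost, words have $O(\log n)$ bits, space is measured in bits, and the output list of primes is not counted against the space. The rolling sieve is the following algorithm. Its data structure is a circular array $T[0..\Delta-1]$ of stacks, each implemented as a linked list. Initialization with a starting value $\mathrm{start}$: set $r=\lfloor\sqrt{\mathrm{start}}\rfloor+1$, $s=r^2$, $\Delta=r+2$, all stacks empty; for each prime $p\le r-1$ push $p$ onto stack $T[(p-(\mathrm{start}\bmod p))\bmod p]$; set $\mathrm{pos}=0$, $m=\mathrm{start}$. The procedure next() does: set isPrime = true; while $T[\mathrm{pos}]$ is nonempty, pop $p$ from it, push $p$ onto $T[(\mathrm{pos}+p)\bmod\Delta]$, and set isPrime = false; then if $m=s$: if isPrime is true, push $r$ onto $T[(\mathrm{pos}+r)\bmod\Delta]$ and set isPrime = false; in any case set $r=r+1$, $s=r^2$; then set $m=m+1$, $\mathrm{pos}=(\mathrm{pos}+1)\bmod\Delta$, and if $\mathrm{pos}=0$ increase $\Delta$ by $2$ (appending two new empty stacks at the end of the array); return isPrime (which reports whether the old value of $m$ is prime). To find all primes up to $n$: output the primes up to $100$ directly, initialize with $\mathrm{start}=100$, and repeatedly call next(), outputting the current integer whenever next() returns true, until $n$ has been processed. *)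

theory Defs
  imports Complex_Main "HOL-Computational_Algebra.Primes"
    "HOL-Library.Discrete_Functions" "HOL-Library.Landau_Symbols"
begin

text \<open>State of the rolling sieve.  The circular array of stacks is a list of
  lists (head of a list = top of the stack); its length is Delta.\<close>

record rs_state =
  tab   :: "nat list list"
  pos   :: nat
  delta :: nat
  rr    :: nat
  ss    :: nat
  mm    :: nat

definition push :: "nat \<Rightarrow> nat \<Rightarrow> nat list list \<Rightarrow> nat list list" where
  "push p j T = T[j := p # T ! j]"

definition rs_init :: "nat \<Rightarrow> rs_state" where
  "rs_init start =
     (let r = floor_sqrt start + 1;
          ps = filter prime [0..<r];
          T0 = replicate (r + 2) [];
          T = fold (\<lambda>p T. push p ((p - start mod p) mod p) T) ps T0
      in \<lparr> tab = T, pos = 0, delta = r + 2, rr = r, ss = r\<^sup>2, mm = start \<rparr>)"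

text \<open>Cost (unit-cost operations) of initialization: allocate the array of
  Delta stacks, and push each prime below r.\<close>
definition rs_init_cost :: "nat \<Rightarrow> nat" where
  "rs_init_cost start =
     (let r = floor_sqrt start + 1 in (r + 2) + length (filter prime [0..<r]) + 1)"

definition rs_next :: "rs_state \<Rightarrow> bool \<times> rs_state" where
  "rs_next st =
     (let P = pos st; D = delta st; stack = tab st ! P;
          isP1 = (stack = []);
          T1 = fold (\<lambda>p T. push p ((P + p) mod D) T) stack ((tab st)[P := []]);
          (isP2, T2, r2) =
             (if mm st = ss st then
                (if isP1 then (False, push (rr st) ((P + rr st) mod D) T1, rr st + 1)
                 else (isP1, T1, rr st + 1))
              else (isP1, T1, rr st));
          P' = (P + 1) mod D;
          (D', T3) = (if P' = 0 then (D + 2, T2 @ [[], []]) else (D, T2))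
      in (isP2, \<lparr> tab = T3, pos = P', delta = D', rr = r2, ss = r2\<^sup>2, mm = mm st + 1 \<rparr>))"

text \<open>Unit-cost operations spent by one call of next(): a constant amount of
  work plus constant work per popped (and re-pushed) prime.\<close>
definition rs_next_cost :: "rs_state \<Rightarrow> nat" where
  "rs_next_cost st = 1 + length (tab st ! pos st)"

text \<open>Space in bits of a state: every word has O(log n) bits; the array has
  Delta words (stack heads), every linked-list node has two words (prime and
  pointer), and there are a constant number of scalar variables.\<close>
definition word_bits :: "nat \<Rightarrow> nat" where
  "word_bits n = floor_log n + 1"

definition rs_space :: "nat \<Rightarrow> rs_state \<Rightarrow> nat" where
  "rs_space n st = word_bits n *
      (length (tab st) + 2 * sum_list (map length (tab st)) + 7)"

definition rs_iter :: "nat \<Rightarrow> rs_state" where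
  "rs_iter k = ((snd \<circ> rs_next) ^^ k) (rs_init 100)"

text \<open>The full algorithm for bound n: output primes up to min n 100
  directly, then (if n \<ge> 100) initialize with start = 100 and call next()
  for m = 100, ..., n, i.e. n - 99 times; call number k processes 100 + k.\<close>
definition rs_output :: "nat \<Rightarrow> nat list" where
  "rs_output n =
     filter prime [0..<min n 100 + 1] @
     (if 100 \<le> n then [100 + k. k \<leftarrow> [0..<n - 99], fst (rs_next (rs_iter k))] else [])"

definition rs_ops :: "nat \<Rightarrow> nat" where
  "rs_ops n = (min n 100 + 1) +
     (if 100 \<le> n then rs_init_cost 100 + (\<Sum>k<n - 99. rs_next_cost (rs_iter k)) else 0)"

text \<open>Peak working space (output not counted) over the whole run.\<close>
definition rs_peak_space :: "nat \<Rightarrow> nat" where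
  "rs_peak_space n =
     (if 100 \<le> n then Max {rs_space n (rs_iter k) | k. k \<le> n - 99} else 0)"

end

theory Submission
  imports Defs "HOL-Real_Asymp.Real_Asymp"
begin

text \<open>Every prime \<open>p < r\<close>, where \<open>r\<close> is about \<open>sqrt m\<close>, waits in the stack of the slot that
  \<open>pos\<close> reaches when the current integer is the least multiple of \<open>p\<close> that is \<open>\<ge> m\<close>; moving
  a popped \<open>p\<close> forward by \<open>p\<close> slots preserves this. So the stack popped for \<open>m\<close> holds exactly
  the primes below \<open>sqrt m\<close> dividing \<open>m\<close>, and it is empty iff \<open>m\<close> is prime, because a
  composite \<open>m\<close> has a prime factor \<open>\<le> sqrt m\<close>. Growing the array by two slots per turn keeps
  its length near \<open>2 * sqrt m\<close>, above \<open>r\<close>.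

  Processing \<open>m\<close> thus costs one step plus one per prime divisor of \<open>m\<close>; summed over
  \<open>m \<le> n\<close> this is at most \<open>n + \<Sum>p\<le>n. n / p\<close>. Chebyshev's argument (the primes in
  \<open>(2^j, 2^(j+1)]\<close> divide the central binomial coefficient, so there are at most
  \<open>2^(j+1) / j\<close> of them) gives \<open>\<Sum>p\<le>n. 1 / p = O(log log n)\<close>. At every moment the
  structure holds \<open>O(sqrt n)\<close> words of \<open>O(log n)\<close> bits.\<close>

section \<open>Chebyshev's bound for the sum of prime reciprocals\<close>

lemma prod_primes_dvd:
  fixes N :: nat
  assumes "finite A" "\<And>p. p \<in> A \<Longrightarrow> prime p \<and> p dvd N"
  shows "\<Prod>A dvd N"
  using assms
proof (induction A rule: finite_induct)
  case empty then show ?case by simp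
next
  case (insert p A)
  have "coprime p (\<Prod>A)"
  proof (rule prod_coprime_right)
    fix q assume "q \<in> A"
    then have "prime q" "q \<noteq> p" using insert by auto
    then show "coprime p q" using insert by (simp add: primes_coprime)
  qed
  then show ?case using insert by (simp add: divides_mult)
qed

text \<open>The primes in \<open>(m, 2m]\<close> divide \<open>(2m)!\<close> but not \<open>m!\<^sup>2\<close>, hence they divide
  \<open>2m choose m \<le> 4\<^sup>m\<close>.\<close>
lemma prod_primes_between_le:
  fixes m :: nat
  shows "\<Prod>{p. prime p \<and> m < p \<and> p \<le> 2*m} \<le> 4^m"
proof -
  let ?A = "{p. prime p \<and> m < p \<and> p \<le> 2*m}"
  have fin: "finite ?A" by (rule finite_subset[of _ "{..2*m}"]) auto
  have dvd_fact: "\<Prod>?A dvd fact (2*m)"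
    by (rule prod_primes_dvd[OF fin]) (auto simp: dvd_fact)
  have fact_eq: "fact m * fact m * (2*m choose m) = (fact (2*m) :: nat)"
    using binomial_fact_lemma[of m "2*m"] by simp
  have "coprime (\<Prod>?A) (fact m * fact m :: nat)"
  proof (rule prod_coprime_left)
    fix p assume "p \<in> ?A"
    then have "prime p" "\<not> p dvd fact m" by (auto simp: prime_dvd_fact_iff)
    then show "coprime p (fact m * fact m :: nat)" by (simp add: prime_imp_coprime)
  qed
  then have "\<Prod>?A dvd (2*m choose m)"
    using dvd_fact fact_eq by (metis coprime_dvd_mult_right_iff mult.assoc)
  then have "\<Prod>?A \<le> 2*m choose m" by (rule dvd_imp_le) simp
  also have "\<dots> \<le> 2^(2*m)" by (rule binomial_le_pow2)
  finally show ?thesis by (simp add: power_mult)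
qed

lemma card_primes_dyadic_le:
  "j * card {p::nat. prime p \<and> 2^j < p \<and> p \<le> 2^Suc j} \<le> 2^Suc j"
proof -
  let ?A = "{p::nat. prime p \<and> 2^j < p \<and> p \<le> 2*2^j}"
  have "(2::nat)^(j * card ?A) = (\<Prod>p\<in>?A. 2^j)" by (simp add: power_mult)
  also have "\<dots> \<le> \<Prod>?A" by (rule prod_mono) auto
  also have "\<dots> \<le> 4^(2^j)" by (rule prod_primes_between_le)
  also have "\<dots> = 2^(2^Suc j)" by (simp add: power_mult)
  finally show ?thesis by simp
qed

definition prime_recip_sum :: "nat \<Rightarrow> real" where
  "prime_recip_sum x = (\<Sum>p | prime p \<and> p \<le> x. 1 / real p)"

lemma prime_recip_sum_mono: "x \<le> y \<Longrightarrow> prime_recip_sum x \<le> prime_recip_sum y"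
  unfolding prime_recip_sum_def by (rule sum_mono2) auto

lemma sum_prime_recip_dyadic_le:
  assumes "j \<ge> 1"
  shows "(\<Sum>p | prime p \<and> 2^j < p \<and> p \<le> 2^Suc j. 1 / real p) \<le> 2 / real j"
proof -
  let ?A = "{p::nat. prime p \<and> 2^j < p \<and> p \<le> 2^Suc j}"
  have "(\<Sum>p\<in>?A. 1 / real p) \<le> (\<Sum>p\<in>?A. 1 / 2^j)"
    by (rule sum_mono) (auto simp: field_simps)
  also have "\<dots> = real (card ?A) / 2^j" by simp
  also have "\<dots> \<le> 2 / real j"
  proof -
    have "real j * real (card ?A) \<le> 2 * 2^j"
      using card_primes_dyadic_le[of j] by (metis of_nat_le_iff of_nat_mult of_nat_numeral of_nat_power power_Suc)
    then show ?thesis using assms by (simp add: field_simps)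
  qed
  finally show ?thesis .
qed

lemma prime_recip_sum_pow2_le:
  "prime_recip_sum (2^Suc J) \<le> 1/2 + 2 * (\<Sum>j=1..J. 1 / real j)"
proof (induction J)
  case 0
  have "{p::nat. prime p \<and> p \<le> 2} = {2}"
    using prime_ge_2_nat by (auto simp: le_antisym)
  then show ?case by (simp add: prime_recip_sum_def)
next
  case (Suc J)
  let ?B = "{p::nat. prime p \<and> p \<le> 2^Suc J}"
  let ?C = "{p::nat. prime p \<and> 2^Suc J < p \<and> p \<le> 2^Suc (Suc J)}"
  have "{p::nat. prime p \<and> p \<le> 2^Suc (Suc J)} = ?B \<union> ?C" by auto
  moreover have "?B \<inter> ?C = {}" by auto
  ultimately have "prime_recip_sum (2^Suc (Suc J)) = prime_recip_sum (2^Suc J) + (\<Sum>p\<in>?C. 1 / real p)"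
    unfolding prime_recip_sum_def by (simp add: sum.union_disjoint)
  also have "\<dots> \<le> 1/2 + 2 * (\<Sum>j=1..J. 1 / real j) + 2 / real (Suc J)"
    using Suc sum_prime_recip_dyadic_le[of "Suc J"] by linarith
  also have "\<dots> = 1/2 + 2 * (\<Sum>j=1..Suc J. 1 / real j)"
    by (simp add: algebra_simps)
  finally show ?case .
qed

lemma harmonic_sum_le_ln: "J \<ge> 1 \<Longrightarrow> (\<Sum>j=1..J. 1 / real j) \<le> 1 + ln (real J)"
proof (induction J rule: dec_induct)
  case base then show ?case by simp
next
  case (step J)
  have "ln (real J / real (Suc J)) \<le> real J / real (Suc J) - 1"
    by (rule ln_le_minus_one) (use step in auto)
  moreover have "ln (real J / real (Suc J)) = ln (real J) - ln (real (Suc J))"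
    using step by (simp add: ln_div)
  moreover have "real J / real (Suc J) - 1 = - (1 / real (Suc J))"
    by (simp add: field_simps)
  ultimately have "1 / real (Suc J) \<le> ln (real (Suc J)) - ln (real J)" by linarith
  then show ?case using step by simp
qed

lemma prime_recip_sum_le:
  assumes "n \<ge> 2"
  shows "prime_recip_sum n \<le> 5/2 + 2 * ln (log 2 (real n))"
proof -
  define J where "J = floor_log n"
  have J: "J \<ge> 1" using assms floor_log_le_iff[of 2 n] floor_log_power[of 1] by (simp add: J_def)
  have "n \<le> 2 ^ Suc J" using floor_log_exp2_gt[of n] by (simp add: J_def)
  then have "prime_recip_sum n \<le> prime_recip_sum (2^Suc J)" by (rule prime_recip_sum_mono)
  also have "\<dots> \<le> 1/2 + 2 * (1 + ln (real J))"
    using prime_recip_sum_pow2_le[of J] harmonic_sum_le_ln[OF J] by argo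
  also have "ln (real J) \<le> ln (log 2 (real n))"
  proof -
    have "real (2 ^ J) \<le> real n" using floor_log_exp2_le[of n] assms by (simp add: J_def)
    then have "log 2 (2 ^ J) \<le> log 2 (real n)"
      using assms by (subst log_le_cancel_iff) auto
    then show ?thesis using J by simp
  qed
  finally show ?thesis by simp
qed


section \<open>Correctness of the rolling sieve\<close>

lemma distinct_if_mset_eq_mset_set:
  assumes "mset xs = mset_set A" "finite A"
  shows "distinct xs"
proof -
  have "set xs = A" using assms by (metis finite_set_mset_mset_set set_mset_mset)
  moreover have "length xs = card A" using assms by (metis size_mset size_mset_set)
  ultimately show ?thesis by (simp add: card_distinct)
qed

lemma prime_factor_sq_le:
  fixes m :: nat
  assumes "\<not> prime m" "m \<ge> 2"
  obtains q where "prime q" "q dvd m" "q^2 \<le> m"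
proof -
  obtain a b where ab: "m = a * b" "a \<noteq> 1" "b \<noteq> 1"
    using assms by (auto simp: prime_nat_iff elim!: dvdE)
  then have "2 \<le> a" "2 \<le> b" using assms by (cases a; cases b; auto)+
  define c where "c = min a b"
  have c: "2 \<le> c" using \<open>2 \<le> a\<close> \<open>2 \<le> b\<close> by (simp add: c_def)
  obtain q where q: "prime q" "q dvd c" using prime_factor_nat[of c] c by auto
  have "c^2 \<le> m" using ab by (simp add: c_def power2_eq_square mult_mono)
  moreover have "c dvd m" using ab by (auto simp: c_def min_def)
  moreover have "q^2 \<le> c^2" using q c by (intro power_mono dvd_imp_le) auto
  ultimately show thesis using that q dvd_trans le_trans by metis
qed

lemma prime_iff_no_smaller_prime_dvd_square:
  fixes r :: nat
  assumes "2 \<le> r"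
  shows "prime r \<longleftrightarrow> (\<forall>p. prime p \<and> p < r \<longrightarrow> \<not> p dvd r^2)"
proof
  assume "prime r"
  then show "\<forall>p. prime p \<and> p < r \<longrightarrow> \<not> p dvd r^2"
    by (metis less_not_refl prime_dvd_power_nat primes_dvd_imp_eq)
next
  assume no_factor: "\<forall>p. prime p \<and> p < r \<longrightarrow> \<not> p dvd r^2"
  show "prime r"
  proof (rule ccontr)
    assume "\<not> prime r"
    then obtain q where q: "prime q" "q dvd r" "q^2 \<le> r"
      using prime_factor_sq_le assms by blast
    then have "q < r" using \<open>\<not> prime r\<close> by (metis le_neq_implies_less le_trans power2_nat_le_imp_le)
    moreover have "q dvd r^2" using q by (simp add: power2_eq_square)
    ultimately show False using no_factor q by blast
  qed
qed

lemma length_push [simp]: "length (push p j T) = length T"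
  by (simp add: push_def)

lemma length_fold_push: "length (fold (\<lambda>p T. push p (f p) T) xs T) = length T"
  by (induction xs arbitrary: T) auto

lemma set_nth_fold_push:
  "(\<forall>p\<in>set xs. f p < length T) \<Longrightarrow> j < length T \<Longrightarrow>
   set (fold (\<lambda>p T. push p (f p) T) xs T ! j) = set (T ! j) \<union> {p \<in> set xs. f p = j}"
proof (induction xs arbitrary: T)
  case Nil then show ?case by simp
next
  case (Cons a xs)
  have "set (fold (\<lambda>p T. push p (f p) T) xs (push a (f a) T) ! j)
        = set (push a (f a) T ! j) \<union> {p \<in> set xs. f p = j}"
    using Cons by (intro Cons.IH) (auto simp: push_def)
  then show ?case using Cons.prems by (auto simp: push_def nth_list_update)
qed

lemma mset_concat_list_update:
  "j < length T \<Longrightarrow> mset (concat (T[j:=x])) + mset (T!j) = mset (concat T) + mset x"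
  by (induction T arbitrary: j) (auto split: nat.split)

lemma mset_concat_fold_push:
  "(\<forall>p\<in>set xs. f p < length T) \<Longrightarrow>
   mset (concat (fold (\<lambda>p T. push p (f p) T) xs T)) = mset (concat T) + mset xs"
proof (induction xs arbitrary: T)
  case Nil then show ?case by simp
next
  case (Cons a xs)
  have "mset (concat (fold (\<lambda>p T. push p (f p) T) xs (push a (f a) T))) =
        mset (concat (push a (f a) T)) + mset xs"
    using Cons by (intro Cons.IH) (auto simp: push_def)
  moreover have "mset (concat (push a (f a) T)) = mset (concat T) + {#a#}"
    using mset_concat_list_update[of "f a" T "a # T ! f a"] Cons.prems by (simp add: push_def)
  ultimately show ?case by simp
qed

lemma rs_next_eq:
 "rs_next st = (tab st ! pos st = [] \<and> mm st \<noteq> ss st,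
   \<lparr>tab = (let T1 = fold (\<lambda>p T. push p ((pos st + p) mod delta st) T) (tab st ! pos st) ((tab st)[pos st := []]);
              T2 = (if mm st = ss st \<and> tab st ! pos st = [] then push (rr st) ((pos st + rr st) mod delta st) T1 else T1)
           in if Suc (pos st) mod delta st = 0 then T2 @ [[],[]] else T2),
    pos = Suc (pos st) mod delta st,
    delta = (if Suc (pos st) mod delta st = 0 then delta st + 2 else delta st),
    rr = (if mm st = ss st then rr st + 1 else rr st),
    ss = (if mm st = ss st then rr st + 1 else rr st)^2,
    mm = mm st + 1\<rparr>)"
  unfolding rs_next_def Let_def by auto

text \<open>The integer that is current when \<open>pos\<close> next reaches slot \<open>j\<close>.\<close>
definition slot_value :: "rs_state \<Rightarrow> nat \<Rightarrow> nat" where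
  "slot_value st j = mm st + (j + delta st - pos st) mod delta st"

lemma slot_value_eq_mm_iff:
  "j < delta st \<Longrightarrow> pos st < delta st \<Longrightarrow> slot_value st j = mm st \<longleftrightarrow> j = pos st"
  by (auto simp: slot_value_def mod_if)

lemma slot_value_rs_next_kept:
  assumes "pos st < delta st" "j < delta st" "j \<noteq> pos st"
  shows "slot_value (snd (rs_next st)) j = slot_value st j"
  using assms by (auto simp: slot_value_def rs_next_eq mod_if)

lemma slot_value_rs_next_moved:
  assumes "pos st < delta st" "1 \<le> p" "p \<le> delta st"
  shows "slot_value (snd (rs_next st)) ((pos st + p) mod delta st) = mm st + p"
  using assms by (auto simp: slot_value_def rs_next_eq mod_if)

lemma mset_tab_rs_next:
  assumes "length (tab st) = delta st" "pos st < delta st"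
  shows "mset (concat (tab (snd (rs_next st)))) =
    mset (concat (tab st)) + (if mm st = ss st \<and> tab st ! pos st = [] then {#rr st#} else {#})"
proof -
  define T1 where "T1 = fold (\<lambda>p T. push p ((pos st + p) mod delta st) T) (tab st ! pos st) ((tab st)[pos st := []])"
  have "mset (concat T1) = mset (concat ((tab st)[pos st := []])) + mset (tab st ! pos st)"
    unfolding T1_def using assms by (intro mset_concat_fold_push) auto
  also have "\<dots> = mset (concat (tab st))"
    using mset_concat_list_update[of "pos st" "tab st" "[]"] assms by simp
  finally have T1: "mset (concat T1) = mset (concat (tab st))" .
  have "length T1 = delta st" using assms by (simp add: T1_def length_fold_push)
  then have "mset (concat (push (rr st) ((pos st + rr st) mod delta st) T1)) = mset (concat T1) + {#rr st#}"
    using mset_concat_list_update[of "(pos st + rr st) mod delta st" T1 "rr st # T1 ! ((pos st + rr st) mod delta st)"] assms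
    by (simp add: push_def)
  then show ?thesis using T1 by (simp add: rs_next_eq Let_def T1_def[symmetric])
qed

lemma set_tab_rs_next:
  assumes "length (tab st) = delta st" "pos st < delta st"
    and "j < delta (snd (rs_next st))" "p \<in> set (tab (snd (rs_next st)) ! j)"
  obtains (kept) "j < delta st" "j \<noteq> pos st" "p \<in> set (tab st ! j)"
    | (moved) "p \<in> set (tab st ! pos st)" "j = (pos st + p) mod delta st"
    | (square) "mm st = ss st" "tab st ! pos st = []" "p = rr st" "j = (pos st + rr st) mod delta st"
proof -
  define S where "S = tab st ! pos st"
  define T1 where "T1 = fold (\<lambda>p T. push p ((pos st + p) mod delta st) T) S ((tab st)[pos st := []])"
  define T2 where "T2 = (if mm st = ss st \<and> S = [] then push (rr st) ((pos st + rr st) mod delta st) T1 else T1)"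
  have D: "delta st > 0" using assms by simp
  have lenT2: "length T2 = delta st" using assms by (simp add: T2_def T1_def length_fold_push)
  have tab': "tab (snd (rs_next st)) = (if Suc (pos st) mod delta st = 0 then T2 @ [[],[]] else T2)"
    by (simp add: rs_next_eq Let_def T2_def T1_def S_def)
  have j: "j < delta st"
  proof (rule ccontr)
    assume "\<not> j < delta st"
    then show False using assms(3,4) lenT2 tab' by (auto simp: rs_next_eq nth_append less_Suc_eq split: if_splits)
  qed
  then have "p \<in> set (T2 ! j)" using assms(4) lenT2 tab' by (auto simp: nth_append split: if_splits)
  moreover have "set (T1 ! j) = (if j = pos st then {} else set (tab st ! j)) \<union> {p\<in>set S. (pos st + p) mod delta st = j}"
    unfolding T1_def using set_nth_fold_push[of S _ "(tab st)[pos st := []]"] j D assms(1)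
    by (simp add: nth_list_update)
  moreover have "length T1 = delta st" using assms(1) by (simp add: T1_def length_fold_push)
  then have "set (T2 ! j) = set (T1 ! j) \<union>
      (if mm st = ss st \<and> S = [] \<and> (pos st + rr st) mod delta st = j then {rr st} else {})"
    using j D by (auto simp: T2_def push_def nth_list_update)
  ultimately show thesis using that j by (auto simp: S_def split: if_splits)
qed

text \<open>The clause on \<open>delta\<close> is the closed form of its growth by 2 per full turn of \<open>pos\<close>,
  starting from \<open>delta = 13\<close> at \<open>mm = 100\<close>; it keeps \<open>delta\<close> close to \<open>2 * sqrt mm\<close>.
  The last clause says that every prime \<open>p < rr\<close> waits at the slot of the least multiple
  of \<open>p\<close> that is at least \<open>mm\<close>.\<close>
definition rs_invariant :: "rs_state \<Rightarrow> bool" where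
 "rs_invariant st \<longleftrightarrow> length (tab st) = delta st \<and> pos st < delta st \<and> 13 \<le> delta st \<and>
    4 * mm st = (delta st - 1)^2 + 4 * pos st + 256 \<and>
    ss st = (rr st)^2 \<and> (rr st - 1)^2 \<le> mm st \<and> mm st \<le> (rr st)^2 \<and>
    mset (concat (tab st)) = mset_set {p. prime p \<and> p < rr st} \<and>
    (\<forall>j<delta st. \<forall>p\<in>set (tab st ! j). p dvd slot_value st j \<and> slot_value st j < mm st + p)"

lemma rs_invariant_bounds:
  assumes "rs_invariant st"
  shows "100 \<le> mm st" "2 \<le> rr st" "rr st \<le> delta st" "rr st < mm st"
proof -
  obtain x where x: "delta st = Suc x" "12 \<le> x"
    using assms by (cases "delta st") (auto simp: rs_invariant_def)
  have x2: "144 \<le> x^2" using power_mono[of 12 x 2] x by simp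
  moreover have eq: "4 * mm st = x^2 + 4 * pos st + 256" "pos st < Suc x"
    using assms x by (auto simp: rs_invariant_def)
  ultimately show m: "100 \<le> mm st" by simp
  have "(rr st)^2 \<le> 1" if "rr st \<le> 1" using power_mono[OF that, of 2] by simp
  then show "2 \<le> rr st" using m assms by (fastforce simp: rs_invariant_def)
  show r: "rr st \<le> delta st"
  proof (rule ccontr)
    assume "\<not> rr st \<le> delta st"
    then have "(Suc x)^2 \<le> (rr st - 1)^2" using x by (intro power_mono) auto
    also have "\<dots> \<le> mm st" using assms by (simp add: rs_invariant_def)
    finally show False using eq x2 by (simp add: power2_eq_square)
  qed
  have "12 * x \<le> x * x" using x by simp
  then show "rr st < mm st" using r eq x(1) unfolding power2_eq_square by linarith
qed

text \<open>A prime \<open>p\<close> dividing \<open>mm\<close> waits at a slot whose value is a multiple of \<open>p\<close> in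
  \<open>[mm, mm + p)\<close>, i.e. \<open>mm\<close> itself, which is the slot \<open>pos\<close>.\<close>
lemma set_tab_pos:
  assumes "rs_invariant st"
  shows "set (tab st ! pos st) = {p. prime p \<and> p < rr st \<and> p dvd mm st}"
proof
  have len: "length (tab st) = delta st" and P: "pos st < delta st"
    and ms: "mset (concat (tab st)) = mset_set {p. prime p \<and> p < rr st}"
    and slots: "\<forall>j<delta st. \<forall>p\<in>set (tab st ! j). p dvd slot_value st j \<and> slot_value st j < mm st + p"
    using assms by (auto simp: rs_invariant_def)
  have set_concat: "set (concat (tab st)) = {p. prime p \<and> p < rr st}"
    using ms by (metis finite_set_mset_mset_set set_mset_mset finite_Collect_conjI finite_Collect_less_nat)
  have "slot_value st (pos st) = mm st" by (simp add: slot_value_def)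
  then show "set (tab st ! pos st) \<subseteq> {p. prime p \<and> p < rr st \<and> p dvd mm st}"
    using slots P set_concat len nth_mem[of "pos st" "tab st"] by auto
  show "{p. prime p \<and> p < rr st \<and> p dvd mm st} \<subseteq> set (tab st ! pos st)"
  proof
    fix p assume p: "p \<in> {p. prime p \<and> p < rr st \<and> p dvd mm st}"
    then have "p \<in> set (concat (tab st))" using set_concat by simp
    then obtain ys where "ys \<in> set (tab st)" "p \<in> set ys" by auto
    then obtain j where j: "j < delta st" "p \<in> set (tab st ! j)" using len by (metis in_set_conv_nth)
    then have dvd: "p dvd slot_value st j" and lt: "slot_value st j < mm st + p" using slots by auto
    have "slot_value st j - mm st = 0"
    proof (rule ccontr)
      assume "slot_value st j - mm st \<noteq> 0"
      moreover have "p dvd slot_value st j - mm st" using dvd p by (simp add: dvd_diff_nat)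
      ultimately have "p \<le> slot_value st j - mm st" by (simp add: dvd_imp_le)
      then show False using lt by (simp add: slot_value_def)
    qed
    then have "slot_value st j = mm st" by (simp add: slot_value_def)
    then show "p \<in> set (tab st ! pos st)" using j slot_value_eq_mm_iff P by metis
  qed
qed

lemma distinct_tab_pos:
  assumes "rs_invariant st"
  shows "distinct (tab st ! pos st)"
proof -
  have "distinct (concat (tab st))"
    using assms by (intro distinct_if_mset_eq_mset_set[of _ "{p. prime p \<and> p < rr st}"]) (auto simp: rs_invariant_def)
  then show ?thesis using assms by (auto simp: rs_invariant_def distinct_concat_iff)
qed

lemma mset_tab_rs_next_eq_primes:
  assumes inv: "rs_invariant st"
  shows "mset (concat (tab (snd (rs_next st)))) = mset_set {p. prime p \<and> p < rr (snd (rs_next st))}"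
proof -
  have len: "length (tab st) = delta st" and P: "pos st < delta st" and ss: "ss st = (rr st)^2"
    and ms: "mset (concat (tab st)) = mset_set {p. prime p \<and> p < rr st}"
    using inv by (auto simp: rs_invariant_def)
  show ?thesis
  proof (cases "mm st = ss st")
    case True
    then have "tab st ! pos st = [] \<longleftrightarrow> prime (rr st)"
      using set_tab_pos[OF inv] ss prime_iff_no_smaller_prime_dvd_square rs_invariant_bounds(2)[OF inv]
      unfolding set_empty[symmetric] by auto
    moreover have "{p. prime p \<and> p < rr (snd (rs_next st))} =
        {p. prime p \<and> p < rr st} \<union> (if prime (rr st) then {rr st} else {})"
      using True by (auto simp: rs_next_eq less_Suc_eq)
    ultimately show ?thesis using mset_tab_rs_next[OF len P] ms True
      by (auto simp: mset_set.insert)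
  next
    case False
    then show ?thesis using mset_tab_rs_next[OF len P] ms by (simp add: rs_next_eq)
  qed
qed

lemma rs_next_waits_at_next_multiple:
  assumes inv: "rs_invariant st"
    and j: "j < delta (snd (rs_next st))" and p: "p \<in> set (tab (snd (rs_next st)) ! j)"
  shows "p dvd slot_value (snd (rs_next st)) j \<and> slot_value (snd (rs_next st)) j < mm (snd (rs_next st)) + p"
proof -
  let ?st' = "snd (rs_next st)"
  have len: "length (tab st) = delta st" and P: "pos st < delta st" and ss: "ss st = (rr st)^2"
    and slots: "\<forall>j<delta st. \<forall>p\<in>set (tab st ! j). p dvd slot_value st j \<and> slot_value st j < mm st + p"
    using inv by (auto simp: rs_invariant_def)
  have r: "2 \<le> rr st" "rr st \<le> delta st" using rs_invariant_bounds[OF inv] by auto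
  show ?thesis
  proof (rule set_tab_rs_next[OF len P j p])
    assume kept: "j < delta st" "j \<noteq> pos st" "p \<in> set (tab st ! j)"
    then have "p dvd slot_value st j \<and> slot_value st j < mm st + p" using slots by blast
    moreover have "slot_value ?st' j = slot_value st j" using kept by (intro slot_value_rs_next_kept[OF P])
    ultimately show ?thesis by (simp add: rs_next_eq)
  next
    assume moved: "p \<in> set (tab st ! pos st)" "j = (pos st + p) mod delta st"
    then have "prime p" "p < rr st" "p dvd mm st" using set_tab_pos[OF inv] by auto
    moreover from this have "slot_value ?st' j = mm st + p"
      using moved r prime_ge_2_nat[of p] by (simp add: slot_value_rs_next_moved[OF P])
    ultimately show ?thesis by (simp add: rs_next_eq)
  next
    assume square: "mm st = ss st" "tab st ! pos st = []" "p = rr st" "j = (pos st + rr st) mod delta st"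
    then have "slot_value ?st' j = rr st * (rr st + 1)"
      using r ss by (simp add: slot_value_rs_next_moved[OF P] power2_eq_square algebra_simps)
    then show ?thesis using square r ss by (simp add: rs_next_eq power2_eq_square)
  qed
qed

lemma rs_invariant_rs_next:
  assumes inv: "rs_invariant st"
  shows "rs_invariant (snd (rs_next st))"
proof -
  let ?st' = "snd (rs_next st)"
  have len: "length (tab st) = delta st" and P: "pos st < delta st" and D: "13 \<le> delta st"
    and eq4: "4 * mm st = (delta st - 1)^2 + 4 * pos st + 256" and ss: "ss st = (rr st)^2"
    and r_lower: "(rr st - 1)^2 \<le> mm st" and r_upper: "mm st \<le> (rr st)^2"
    using inv by (auto simp: rs_invariant_def)
  obtain x where x: "delta st = Suc x" using D by (cases "delta st") auto
  have eq4': "4 * mm ?st' = (delta ?st' - 1)^2 + 4 * pos ?st' + 256"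
  proof (cases "Suc (pos st) = delta st")
    case True
    then show ?thesis using eq4 x by (simp add: rs_next_eq power2_eq_square)
  next
    case False
    then have "Suc (pos st) < delta st" using P by simp
    then show ?thesis using eq4 by (simp add: rs_next_eq)
  qed
  have r': "(rr ?st' - 1)^2 \<le> mm ?st' \<and> mm ?st' \<le> (rr ?st')^2"
    using r_lower r_upper ss by (auto simp: rs_next_eq power2_eq_square)
  have "length (tab ?st') = delta ?st'"
    using len by (simp add: rs_next_eq Let_def length_fold_push)
  then show ?thesis
    using eq4' r' D P mset_tab_rs_next_eq_primes[OF inv] rs_next_waits_at_next_multiple[OF inv]
    unfolding rs_invariant_def by (simp add: rs_next_eq)
qed

lemma rs_next_reports_prime:
  assumes inv: "rs_invariant st"
  shows "fst (rs_next st) = prime (mm st)"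
proof -
  have ss: "ss st = (rr st)^2" "mm st \<le> (rr st)^2" using inv by (auto simp: rs_invariant_def)
  have fst_eq: "fst (rs_next st) \<longleftrightarrow> tab st ! pos st = [] \<and> mm st \<noteq> ss st"
    by (simp add: rs_next_eq)
  have S: "tab st ! pos st = [] \<longleftrightarrow> \<not> (\<exists>p. prime p \<and> p < rr st \<and> p dvd mm st)"
    using set_tab_pos[OF inv] unfolding set_empty[symmetric] by auto
  show ?thesis
  proof (cases "mm st = ss st")
    case True
    then show ?thesis using fst_eq ss by (simp add: prime_power_iff)
  next
    case False
    then have lt: "mm st < (rr st)^2" using ss by simp
    show ?thesis
    proof (cases "prime (mm st)")
      case True
      have "\<not> (\<exists>p. prime p \<and> p < rr st \<and> p dvd mm st)"
      proof
        assume "\<exists>p. prime p \<and> p < rr st \<and> p dvd mm st"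
        then obtain p where p: "prime p" "p < rr st" "p dvd mm st" by blast
        then have "p = mm st" using True primes_dvd_imp_eq by blast
        then show False using p rs_invariant_bounds(4)[OF inv] by simp
      qed
      then show ?thesis using fst_eq S False True by simp
    next
      case False
      obtain q where q: "prime q" "q dvd mm st" "q^2 \<le> mm st"
        using prime_factor_sq_le[OF False] rs_invariant_bounds[OF inv] by auto
      then have "q^2 < (rr st)^2" using lt by linarith
      then have "q < rr st" by (rule power_less_imp_less_base) simp
      then show ?thesis using fst_eq S False q by auto
    qed
  qed
qed

lemma rs_next_cost_eq:
  assumes "rs_invariant st"
  shows "rs_next_cost st = 1 + card {p. prime p \<and> p < rr st \<and> p dvd mm st}"
  using set_tab_pos[OF assms] distinct_tab_pos[OF assms]
  by (simp add: rs_next_cost_def distinct_card[symmetric])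

lemma filter_prime_upt_11: "filter prime [0..<11::nat] = [2,3,5,7]"
proof -
  have "[0..<11::nat] = [0,1,2,3,4,5,6,7,8,9,10]" by (simp add: upt_rec)
  moreover have "prime (3::nat)" "prime (5::nat)" "prime (7::nat)" "\<not> prime (4::nat)"
    "\<not> prime (6::nat)" "\<not> prime (8::nat)" "\<not> prime (9::nat)" "\<not> prime (10::nat)"
    by (simp_all add: prime_nat_iff' atLeastLessThan_upt upt_rec)
  ultimately show ?thesis by simp
qed

lemma floor_sqrt_100: "floor_sqrt 100 = 10"
  using floor_sqrt_inverse_power2[of 10] by simp

lemma rs_init_100:
  "rs_init 100 = \<lparr>tab = [[5,2],[],[3],[],[],[7],[],[],[],[],[],[],[]], pos = 0, delta = 13, rr = 11, ss = 121, mm = 100\<rparr>"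
proof -
  have "replicate 13 [] = [[],[],[],[],[],[],[],[],[],[],[],[],[]::nat list]"
    by (simp add: numeral_eq_Suc)
  then show ?thesis
    unfolding rs_init_def Let_def by (simp add: floor_sqrt_100 filter_prime_upt_11 push_def)
qed

lemma rs_invariant_init: "rs_invariant (rs_init 100)"
proof -
  have "{p::nat. prime p \<and> p < 11} = set (filter prime [0..<11])" by auto
  then have ms: "mset (concat [[5,2],[],[3],[],[],[7],[],[],[],[],[],[],[]]) = mset_set {p::nat. prime p \<and> p < 11}"
    by (simp add: filter_prime_upt_11)
  have "\<forall>j\<in>set [0..<13]. \<forall>p\<in>set ([[5,2],[],[3],[],[],[7],[],[],[],[],[],[],[]] ! j).
           p dvd (100 + (j + 13) mod 13) \<and> 100 + (j + 13) mod 13 < 100 + (p::nat)"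
    by (simp add: upt_rec)
  then show ?thesis unfolding rs_init_100 rs_invariant_def slot_value_def using ms by simp
qed

lemma rs_iter_Suc: "rs_iter (Suc k) = snd (rs_next (rs_iter k))"
  by (simp add: rs_iter_def)

lemma rs_invariant_rs_iter: "rs_invariant (rs_iter k)"
  by (induction k) (simp_all add: rs_iter_def rs_invariant_init rs_invariant_rs_next)

lemma mm_rs_iter: "mm (rs_iter k) = 100 + k"
  by (induction k) (simp_all add: rs_iter_Suc rs_next_eq, simp add: rs_iter_def rs_init_100)

theorem rs_output_correct: "rs_output n = filter prime [0..<n + 1]"
proof (cases "100 \<le> n")
  case False
  then show ?thesis by (simp add: rs_output_def)
next
  case True
  have fst_eq: "fst (rs_next (rs_iter k)) = prime (100 + k)" for k
    using rs_next_reports_prime[OF rs_invariant_rs_iter] mm_rs_iter by metis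
  have comprehension: "[100 + k. k \<leftarrow> ks, fst (rs_next (rs_iter k))]
        = map (\<lambda>k. 100 + k) (filter (\<lambda>k. prime (100 + k)) ks)" for ks
    by (induction ks) (simp_all add: fst_eq)
  have "[100 + k. k \<leftarrow> [0..<n - 99], fst (rs_next (rs_iter k))]
        = map (\<lambda>k. 100 + k) (filter (\<lambda>k. prime (100 + k)) [0..<n - 99])"
    by (rule comprehension)
  also have "\<dots> = filter prime (map (\<lambda>k. 100 + k) [0..<n - 99])"
    by (simp add: filter_map comp_def)
  also have "map (\<lambda>k. 100 + k) [0..<n - 99] = [100..<n+1]"
    using map_add_upt[of 100 "n - 99"] True by (simp add: add.commute)
  also have "[100..<n+1] = 100 # [101..<n+1]" using True by (simp add: upt_conv_Cons)
  finally have "[100 + k. k \<leftarrow> [0..<n - 99], fst (rs_next (rs_iter k))] = filter prime [101..<n+1]"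
    using prime_product[of 10 10] by simp
  moreover have "[0..<n+1] = [0..<101] @ [101..<n+1]"
    using True upt_add_eq_append[of 0 101 "n - 100"] by simp
  ultimately show ?thesis using True by (simp add: rs_output_def)
qed


section \<open>Operation count\<close>

lemma rs_next_cost_rs_iter_le:
  assumes "100 + k \<le> n"
  shows "rs_next_cost (rs_iter k) \<le> 1 + card {p. prime p \<and> p \<le> n \<and> p dvd (100 + k)}"
proof -
  have "{p. prime p \<and> p < rr (rs_iter k) \<and> p dvd (100 + k)} \<subseteq> {p. prime p \<and> p \<le> n \<and> p dvd (100 + k)}"
    using assms by (auto dest: dvd_imp_le)
  then have "card {p. prime p \<and> p < rr (rs_iter k) \<and> p dvd (100 + k)} \<le> card {p. prime p \<and> p \<le> n \<and> p dvd (100 + k)}"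
    by (rule card_mono[rotated]) simp
  then show ?thesis using rs_next_cost_eq[OF rs_invariant_rs_iter, of k] by (simp add: mm_rs_iter)
qed

lemma sum_card_filter_swap:
  assumes "finite A" "finite B"
  shows "(\<Sum>a\<in>A. card {b\<in>B. R a b}) = (\<Sum>b\<in>B. card {a\<in>A. R a b})"
proof -
  have "(\<Sum>a\<in>A. card {b\<in>B. R a b}) = (\<Sum>a\<in>A. \<Sum>b\<in>B. if R a b then 1 else 0)"
    using assms by (simp add: sum.inter_filter[symmetric])
  also have "\<dots> = (\<Sum>b\<in>B. \<Sum>a\<in>A. if R a b then 1 else 0)" by (rule sum.swap)
  also have "\<dots> = (\<Sum>b\<in>B. card {a\<in>A. R a b})"
    using assms by (simp add: sum.inter_filter[symmetric])
  finally show ?thesis .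
qed

lemma card_multiples_le:
  fixes p :: nat
  assumes "0 < p"
  shows "card {m\<in>{1..n}. p dvd m} \<le> n div p"
proof -
  have "{m\<in>{1..n}. p dvd m} \<subseteq> (\<lambda>i. p * i) ` {1..n div p}"
  proof
    fix m assume "m \<in> {m\<in>{1..n}. p dvd m}"
    then obtain i where i: "m = p * i" "1 \<le> m" "m \<le> n" by (auto elim: dvdE)
    moreover have "i \<le> n div p" using i assms by (simp add: less_eq_div_iff_mult_less_eq mult.commute[of i])
    ultimately have "i \<in> {1..n div p}" by (cases i) auto
    then show "m \<in> (\<lambda>i. p * i) ` {1..n div p}" using i by blast
  qed
  then have "card {m\<in>{1..n}. p dvd m} \<le> card ((\<lambda>i. p * i) ` {1..n div p})"
    by (rule card_mono[rotated]) simp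
  also have "\<dots> \<le> n div p" using card_image_le[of "{1..n div p}" "\<lambda>i. p * i"] by simp
  finally show ?thesis .
qed

text \<open>A prime \<open>p\<close> is popped only when the current integer is a multiple of it, hence at most \<open>n / p\<close>
  times in total.\<close>
lemma sum_rs_next_cost_le:
  assumes "100 \<le> n"
  shows "(\<Sum>k<n - 99. rs_next_cost (rs_iter k)) \<le> n + (\<Sum>p | prime p \<and> p \<le> n. n div p)"
proof -
  let ?P = "{p. prime p \<and> p \<le> n}"
  have "(\<Sum>k<n - 99. rs_next_cost (rs_iter k)) \<le> (\<Sum>k<n - 99. 1 + card {p\<in>?P. p dvd (100 + k)})"
  proof (rule sum_mono)
    fix k assume "k \<in> {..<n - 99}"
    then show "rs_next_cost (rs_iter k) \<le> 1 + card {p\<in>?P. p dvd (100 + k)}"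
      using rs_next_cost_rs_iter_le[of k n] assms by simp
  qed
  also have "\<dots> = (n - 99) + (\<Sum>k<n - 99. card {p\<in>?P. p dvd (100 + k)})"
    by (simp only: sum.distrib) simp
  also have "\<dots> = (n - 99) + (\<Sum>m\<in>(\<lambda>k. 100 + k) ` {..<n - 99}. card {p\<in>?P. p dvd m})"
    by (simp add: sum.reindex)
  also have "\<dots> \<le> n + (\<Sum>m\<in>{1..n}. card {p\<in>?P. p dvd m})"
    by (intro add_mono sum_mono2) auto
  also have "\<dots> = n + (\<Sum>p\<in>?P. card {m\<in>{1..n}. p dvd m})"
    by (subst sum_card_filter_swap) auto
  also have "\<dots> \<le> n + (\<Sum>p\<in>?P. n div p)"
    by (intro add_left_mono sum_mono card_multiples_le) (simp add: prime_gt_0_nat)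
  finally show ?thesis by simp
qed

lemma rs_init_cost_100: "rs_init_cost 100 = 18"
  by (simp add: rs_init_cost_def floor_sqrt_100 filter_prime_upt_11)

lemma rs_ops_le:
  assumes "100 \<le> n"
  shows "real (rs_ops n) \<le> 119 + real n + real n * prime_recip_sum n"
proof -
  have "rs_ops n = 119 + (\<Sum>k<n - 99. rs_next_cost (rs_iter k))"
    using assms by (simp add: rs_ops_def rs_init_cost_100)
  then have "real (rs_ops n) \<le> 119 + real n + (\<Sum>p | prime p \<and> p \<le> n. real (n div p))"
    using sum_rs_next_cost_le[OF assms] by (simp flip: of_nat_add of_nat_sum)
  also have "(\<Sum>p | prime p \<and> p \<le> n. real (n div p)) \<le> (\<Sum>p | prime p \<and> p \<le> n. real n * (1 / real p))"
    by (intro sum_mono) (simp add: of_nat_div_le_of_nat)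
  also have "\<dots> = real n * prime_recip_sum n" by (simp add: prime_recip_sum_def sum_distrib_left)
  finally show ?thesis by simp
qed

theorem rs_ops_bigo: "(\<lambda>n. real (rs_ops n)) \<in> O(\<lambda>n. real n * ln (ln (real n)))"
proof -
  define h where "h = (\<lambda>n::nat. 119 + real n + real n * (5/2 + 2 * ln (log 2 (real n))))"
  have "(\<lambda>n. real (rs_ops n)) \<in> O(h)"
  proof (rule bigoI[where c = 1])
    show "eventually (\<lambda>n. norm (real (rs_ops n)) \<le> 1 * norm (h n)) at_top"
      using eventually_ge_at_top[of "100::nat"]
    proof eventually_elim
      case (elim n)
      have "real n * prime_recip_sum n \<le> real n * (5/2 + 2 * ln (log 2 (real n)))"
        using prime_recip_sum_le[of n] elim by (intro mult_left_mono) auto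
      then show ?case using rs_ops_le[OF elim] by (simp add: h_def)
    qed
  qed
  also have "h \<in> O(\<lambda>n. real n * ln (ln (real n)))"
    unfolding h_def by real_asymp
  finally show ?thesis .
qed


section \<open>Space\<close>

lemma real_le_sqrt_plus_one:
  fixes a b :: nat
  assumes "(a - 1)^2 \<le> b" "1 \<le> a"
  shows "real a \<le> sqrt (real b) + 1"
proof -
  have "real (a - 1) ^2 \<le> real b" using assms(1) by (metis of_nat_le_iff of_nat_power)
  then have "real (a - 1) \<le> sqrt (real b)" by (rule real_le_rsqrt)
  then show ?thesis using assms(2) by (simp add: of_nat_diff)
qed

lemma word_bits_le: "1 \<le> n \<Longrightarrow> real (word_bits n) \<le> log 2 (real n) + 1"
proof -
  assume n: "1 \<le> n"
  then have "real (2 ^ floor_log n) \<le> real n" using floor_log_exp2_le[of n] by simp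
  then have "log 2 (2 ^ floor_log n) \<le> log 2 (real n)"
    using n by (subst log_le_cancel_iff) auto
  then show ?thesis by (simp add: word_bits_def)
qed

lemma rs_space_le:
  assumes inv: "rs_invariant st" and m: "mm st \<le> n + 1" and n: "1 \<le> n"
  shows "real (rs_space n st) \<le> (log 2 (real n) + 1) * (4 * sqrt (real n + 1) + 10)"
proof -
  have len: "length (tab st) = delta st" and D: "(delta st - 1)^2 \<le> 4 * mm st" "13 \<le> delta st"
    and r: "(rr st - 1)^2 \<le> mm st"
    and ms: "mset (concat (tab st)) = mset_set {p. prime p \<and> p < rr st}"
    using inv by (auto simp: rs_invariant_def)
  have "sum_list (map length (tab st)) = size (mset (concat (tab st)))" by (simp add: length_concat)
  also have "\<dots> = card {p. prime p \<and> p < rr st}" using ms by simp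
  also have "\<dots> \<le> card {..<rr st}" by (rule card_mono) auto
  finally have nodes: "sum_list (map length (tab st)) \<le> rr st" by simp
  have "sqrt (real (mm st)) \<le> sqrt (real n + 1)" using m by simp
  moreover have "real (delta st) \<le> 2 * sqrt (real (mm st)) + 1"
    using real_le_sqrt_plus_one[OF D(1)] D(2) by (simp add: real_sqrt_mult)
  moreover have "real (rr st) \<le> sqrt (real (mm st)) + 1"
    using real_le_sqrt_plus_one[OF r] rs_invariant_bounds(2)[OF inv] by simp
  moreover have "real (length (tab st) + 2 * sum_list (map length (tab st)) + 7)
      \<le> real (delta st) + 2 * real (rr st) + 7"
    using len nodes by simp
  ultimately have "real (length (tab st) + 2 * sum_list (map length (tab st)) + 7) \<le> 4 * sqrt (real n + 1) + 10"
    by linarith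
  moreover have "0 \<le> log 2 (real n)" using n by simp
  ultimately show ?thesis
    unfolding rs_space_def of_nat_mult using word_bits_le[OF n] by (intro mult_mono) simp_all
qed

lemma rs_peak_space_le:
  assumes n: "100 \<le> n"
  shows "real (rs_peak_space n) \<le> (log 2 (real n) + 1) * (4 * sqrt (real n + 1) + 10)"
proof -
  have "{rs_space n (rs_iter k) | k. k \<le> n - 99} = (\<lambda>k. rs_space n (rs_iter k)) ` {..n - 99}"
    by auto
  then have peak: "rs_peak_space n = Max ((\<lambda>k. rs_space n (rs_iter k)) ` {..n - 99})"
    using n by (simp add: rs_peak_space_def)
  have "Max ((\<lambda>k. rs_space n (rs_iter k)) ` {..n - 99}) \<in> (\<lambda>k. rs_space n (rs_iter k)) ` {..n - 99}"
    by (rule Max_in) auto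
  then obtain k where "k \<le> n - 99" "rs_peak_space n = rs_space n (rs_iter k)"
    unfolding peak by blast
  moreover have "mm (rs_iter k) \<le> n + 1" using \<open>k \<le> n - 99\<close> n by (simp add: mm_rs_iter)
  ultimately show ?thesis using rs_space_le[OF rs_invariant_rs_iter] n by simp
qed

theorem rs_peak_space_bigo: "(\<lambda>n. real (rs_peak_space n)) \<in> O(\<lambda>n. sqrt (real n) * ln (real n))"
proof -
  define h where "h = (\<lambda>n::nat. (log 2 (real n) + 1) * (4 * sqrt (real n + 1) + 10))"
  have "(\<lambda>n. real (rs_peak_space n)) \<in> O(h)"
  proof (rule bigoI[where c = 1])
    show "eventually (\<lambda>n. norm (real (rs_peak_space n)) \<le> 1 * norm (h n)) at_top"
      using eventually_ge_at_top[of "100::nat"]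
      by eventually_elim (use rs_peak_space_le in \<open>simp add: h_def\<close>)
  qed
  also have "h \<in> O(\<lambda>n. sqrt (real n) * ln (real n))"
    unfolding h_def by real_asymp
  finally show ?thesis .
qed


theorem theorem2:
  shows "(\<forall>n. rs_output n = filter prime [0..<n + 1]) \<and>
         (\<lambda>n. real (rs_ops n)) \<in> O(\<lambda>n. real n * ln (ln (real n))) \<and>
         (\<lambda>n. real (rs_peak_space n)) \<in> O(\<lambda>n. sqrt (real n) * ln (real n))"
  using rs_output_correct rs_ops_bigo rs_peak_space_bigo by blast

end
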